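(* Let $f:[0,1]\to\mathbb{R}$ with $f(0),f(1)\in\mathbb{Z}$, and let $n\in\mathbb{N}_+$, $n\ge 3$. Set \[ \psi_n(x):=(n+1)\int_0^1 t(1-t)^{n(1-x)+1}\frac{(1-t)^{nx-1}-t^{nx-1}}{1-2t}\,dt,\quad x\in[0,1]. \] If $f(x)+\psi_n(x)$ is monotone decreasing on $[0,1]$, then $\widetilde{B}_n(f)$ is monotone decreasing on $[0,1]$.
   Context: For $n\in\mathbb{N}_+$ and $f:[0,1]\to\mathbb{R}$, $\widetilde{B}_n(f)(x):=\sum_{k=0}^n \left[f\left(\frac{k}{n}\right)\binom{n}{k}\right]x^k(1-x)^{n-k}$, where $[\alpha]$ is the largest integer $\le\alpha$. Monotone decreasing is meant in the non-strict sense. *)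

theory Defs
  imports "HOL-Analysis.Analysis"
begin

definition Btilde :: "nat \<Rightarrow> (real \<Rightarrow> real) \<Rightarrow> real \<Rightarrow> real" where
  "Btilde n f x = (\<Sum>k=0..n. real_of_int \<lfloor>f (real k / real n) * real (n choose k)\<rfloor>
                      * x ^ k * (1 - x) ^ (n - k))"

definition psi :: "nat \<Rightarrow> real \<Rightarrow> real" where
  "psi n x = (real n + 1) * integral {0..1} (\<lambda>t. t * (1 - t) powr (real n * (1 - x) + 1)
       * (((1 - t) powr (real n * x - 1) - t powr (real n * x - 1)) / (1 - 2 * t)))"

end

(*
  Write b k = \<lfloor>f(k/n) C(n,k)\<rfloor> / C(n,k), so that Btilde n f = \<Sum>k b k Bernstein n k.
  The derivative of such a Bernstein sum is n \<Sum>k (b (k+1) - b k) Bernstein (n-1) k, so it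
  suffices that the coefficients b k decrease.  Rounding down moves b k below f(k/n) by less
  than 1/C(n,k), and psi n is built to pay for exactly this loss: raising x by 1/n raises its
  integrand by t^k (1-t)^(n-k), a Beta integrand, whence psi n ((k+1)/n) - psi n (k/n) = 1/C(n,k).
  Monotonicity of f + psi n therefore gives f((k+1)/n) \<le> f(k/n) - 1/C(n,k), which absorbs
  the rounding.
*)
theory Submission
  imports Defs
begin

lemma has_real_derivative_Bernstein:
  "(Bernstein (Suc m) k has_real_derivative
      real (Suc m) * ((if k = 0 then 0 else Bernstein m (k - 1) x) - Bernstein m k x)) (at x)"
proof -
  let ?c = "real (Suc m choose k)"
  have deriv: "(Bernstein (Suc m) k has_real_derivative
      ?c * (real k * x ^ (k - 1) * (1 - x) ^ (Suc m - k)
        - real (Suc m - k) * x ^ k * (1 - x) ^ (m - k))) (at x)"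
    unfolding Bernstein_def[abs_def]
    by (rule derivative_eq_intros refl)+ (simp add: algebra_simps Suc_diff_le)
  have left: "?c * (real k * x ^ (k - 1) * (1 - x) ^ (Suc m - k))
      = real (Suc m) * (if k = 0 then 0 else Bernstein m (k - 1) x)"
  proof (cases k)
    case (Suc j)
    have "real (Suc m choose Suc j) * real (Suc j) = real (Suc m) * real (m choose j)"
      using Suc_times_binomial_eq[of m j] by (metis of_nat_mult)
    then show ?thesis
      using Suc by (simp add: Bernstein_def)
  qed simp
  have right: "?c * (real (Suc m - k) * x ^ k * (1 - x) ^ (m - k))
      = real (Suc m) * Bernstein m k x"
  proof -
    have "?c * real (Suc m - k) = real (Suc m) * real (m choose k)"
      using binomial_absorb_comp[of "Suc m" k] by (metis diff_Suc_1 mult.commute of_nat_mult)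
    then show ?thesis
      by (simp add: Bernstein_def)
  qed
  show ?thesis
    using deriv unfolding right_diff_distrib left right .
qed

lemma Bernstein_above_degree: "m < k \<Longrightarrow> Bernstein m k x = 0"
  by (simp add: Bernstein_def)

lemma has_real_derivative_Bernstein_sum:
  "((\<lambda>x. \<Sum>k\<le>Suc m. b k * Bernstein (Suc m) k x) has_real_derivative
      real (Suc m) * (\<Sum>k\<le>m. (b (Suc k) - b k) * Bernstein m k x)) (at x)"
proof -
  have "((\<lambda>x. \<Sum>k\<le>Suc m. b k * Bernstein (Suc m) k x) has_real_derivative
      (\<Sum>k\<le>Suc m. b k * (real (Suc m)
        * ((if k = 0 then 0 else Bernstein m (k - 1) x) - Bernstein m k x)))) (at x)"
    by (intro DERIV_sum DERIV_cmult has_real_derivative_Bernstein)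
  also have "(\<Sum>k\<le>Suc m. b k * (real (Suc m)
        * ((if k = 0 then 0 else Bernstein m (k - 1) x) - Bernstein m k x)))
      = real (Suc m) * ((\<Sum>k\<le>Suc m. b k * (if k = 0 then 0 else Bernstein m (k - 1) x))
                        - (\<Sum>k\<le>Suc m. b k * Bernstein m k x))"
    by (simp only: right_diff_distrib sum_subtractf sum_distrib_left mult.left_commute)
  also have "(\<Sum>k\<le>Suc m. b k * (if k = 0 then 0 else Bernstein m (k - 1) x))
      = (\<Sum>k\<le>m. b (Suc k) * Bernstein m k x)"
    by (subst sum.atMost_Suc_shift) simp
  also have "(\<Sum>k\<le>Suc m. b k * Bernstein m k x) = (\<Sum>k\<le>m. b k * Bernstein m k x)"
    by (simp add: Bernstein_above_degree)
  finally show ?thesis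
    by (simp add: sum_subtractf left_diff_distrib)
qed

lemma Bernstein_sum_antimono:
  assumes b: "\<And>k. k < n \<Longrightarrow> b (Suc k) \<le> b k" and "0 \<le> x" "x \<le> y" "y \<le> 1"
  shows "(\<Sum>k\<le>n. b k * Bernstein n k y) \<le> (\<Sum>k\<le>n. b k * Bernstein n k x)"
proof (cases n)
  case 0
  then show ?thesis by (simp add: Bernstein_def)
next
  case (Suc m)
  show ?thesis
  proof (rule DERIV_nonpos_imp_nonincreasing[OF \<open>x \<le> y\<close>])
    fix z assume "x \<le> z" "z \<le> y"
    have "(\<Sum>k\<le>m. (b (Suc k) - b k) * Bernstein m k z) \<le> 0"
    proof (rule sum_nonpos)
      fix k assume "k \<in> {..m}"
      then show "(b (Suc k) - b k) * Bernstein m k z \<le> 0"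
        using b[of k] Suc assms \<open>x \<le> z\<close> \<open>z \<le> y\<close>
        by (intro mult_nonpos_nonneg Bernstein_nonneg) auto
    qed
    then have "real (Suc m) * (\<Sum>k\<le>m. (b (Suc k) - b k) * Bernstein m k z) \<le> 0"
      by (rule mult_nonneg_nonpos[OF of_nat_0_le_iff])
    moreover have "((\<lambda>x. \<Sum>k\<le>n. b k * Bernstein n k x) has_real_derivative
        real (Suc m) * (\<Sum>k\<le>m. (b (Suc k) - b k) * Bernstein m k z)) (at z)"
      unfolding Suc by (rule has_real_derivative_Bernstein_sum)
    ultimately show "\<exists>d. ((\<lambda>x. \<Sum>k\<le>n. b k * Bernstein n k x) has_real_derivative d) (at z)
        \<and> d \<le> 0"
      by blast
  qed
qed

lemma Beta_binomial:
  assumes "i \<le> n"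
  shows "(real n + 1) * Beta (real i + 1) (real (n - i) + 1) = 1 / real (n choose i)"
proof -
  have "Gamma (real i + 1 + (real (n - i) + 1)) = fact (Suc n)"
    using Gamma_fact[of "Suc n", where 'a=real] assms by (simp add: of_nat_diff algebra_simps)
  then have "Beta (real i + 1) (real (n - i) + 1)
      = fact i * fact (n - i) / ((real n + 1) * fact n)"
    using Gamma_fact[of i, where 'a=real] Gamma_fact[of "n - i", where 'a=real]
    by (simp add: Beta_def fact_Suc add.commute)
  then have "(real n + 1) * Beta (real i + 1) (real (n - i) + 1)
      = fact i * fact (n - i) / fact n"
    by simp
  also have "\<dots> = 1 / real (n choose i)"
    using binomial_fact[OF assms, where 'a=real] by simp
  finally show ?thesis .
qed

definition psi_kernel :: "nat \<Rightarrow> real \<Rightarrow> real \<Rightarrow> real" where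
  "psi_kernel n x t = t * (1 - t) powr (real n * (1 - x) + 1)
     * (((1 - t) powr (real n * x - 1) - t powr (real n * x - 1)) / (1 - 2 * t))"

lemma psi_eq_integral_psi_kernel: "psi n x = (real n + 1) * integral {0..1} (psi_kernel n x)"
  by (simp add: psi_def psi_kernel_def[abs_def])

lemma psi_kernel_shift:
  assumes "0 < n" "0 < t" "t < 1" "t \<noteq> 1/2"
  shows "psi_kernel n (x + 1 / real n) t
    = psi_kernel n x t + t powr (real n * x) * (1 - t) powr (real n * (1 - x))"
proof -
  have t': "0 < 1 - t" "1 - 2 * t \<noteq> 0" using assms by auto
  have exponents: "real n * (x + 1 / real n) - 1 = real n * x"
    "real n * (1 - (x + 1 / real n)) + 1 = real n * (1 - x)"
    using assms by (simp_all add: field_simps)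
  have powers: "(1 - t) powr (real n * (1 - x) + 1) = (1 - t) powr (real n * (1 - x)) * (1 - t)"
    "(1 - t) powr (real n * x) = (1 - t) powr (real n * x - 1) * (1 - t)"
    "t powr (real n * x) = t powr (real n * x - 1) * t"
    using t' assms powr_add[of "1 - t" "real n * (1 - x)" 1]
      powr_add[of "1 - t" "real n * x - 1" 1] powr_add[of t "real n * x - 1" 1]
    by simp_all
  \<comment> \<open>the difference of the kernels has the factor (1 - t) - t, cancelling 1 - 2 t\<close>
  show ?thesis
    unfolding psi_kernel_def exponents powers using t' by (simp add: field_simps)
qed

lemma psi_kernel_zero:
  assumes "0 < t" "t < 1" "t \<noteq> 1/2"
  shows "psi_kernel n 0 t = - ((1 - t) powr real n)"
proof -
  have t': "0 < 1 - t" "1 - 2 * t \<noteq> 0" using assms by auto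
  have "psi_kernel n 0 t
      = t * (1 - t) powr (real n + 1) * ((inverse (1 - t) - inverse t) / (1 - 2 * t))"
    unfolding psi_kernel_def using assms t' by (simp add: powr_minus)
  also have "\<dots>
      = (1 - t) powr real n * ((t * (1 - t) * (inverse (1 - t) - inverse t)) / (1 - 2 * t))"
    using t' by (simp add: powr_add)
  also have "t * (1 - t) * (inverse (1 - t) - inverse t) = - (1 - 2 * t)"
    using assms t' by (simp add: field_simps)
  also have "- (1 - 2 * t) / (1 - 2 * t) = -1"
    by (simp only: divide_minus_left divide_self[OF t'(2)])
  finally show ?thesis
    by simp
qed

lemma has_integral_psi_kernel_grid:
  assumes "0 < n" "k \<le> n"
  shows "(psi_kernel n (real k / real n) has_integral
            (\<Sum>i<k. Beta (real i + 1) (real (n - i) + 1)) - Beta 1 (real n + 1)) {0..1}"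
  using assms(2)
proof (induction k)
  case 0
  have "((\<lambda>t. t powr (1 - 1) * (1 - t) powr (real n + 1 - 1))
      has_integral Beta 1 (real n + 1)) {0..1}"
    by (rule has_integral_Beta_real) auto
  then have "((\<lambda>t. - (t powr (1 - 1) * (1 - t) powr (real n + 1 - 1)))
      has_integral - Beta 1 (real n + 1)) {0..1}"
    by (rule has_integral_neg)
  then have "(psi_kernel n 0 has_integral - Beta 1 (real n + 1)) {0..1}"
    by (rule has_integral_spike[of "{0, 1, 1/2}", rotated 2]) (auto simp: psi_kernel_zero)
  then show ?case
    by simp
next
  case (Suc k)
  have "((\<lambda>t. t powr (real k + 1 - 1) * (1 - t) powr (real (n - k) + 1 - 1))
      has_integral Beta (real k + 1) (real (n - k) + 1)) {0..1}"
    by (rule has_integral_Beta_real) auto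
  from has_integral_add[OF Suc.IH[OF Suc_leD[OF Suc.prems]] this]
  have "((\<lambda>t. psi_kernel n (real k / real n) t + t powr real k * (1 - t) powr real (n - k))
      has_integral (\<Sum>i<Suc k. Beta (real i + 1) (real (n - i) + 1)) - Beta 1 (real n + 1))
      {0..1}"
    by (simp add: algebra_simps)
  then show ?case
  proof (rule has_integral_spike[of "{0, 1, 1/2}", rotated 2])
    fix t assume t: "t \<in> {0..1} - {0, 1, 1/2 :: real}"
    have "real (Suc k) / real n = real k / real n + 1 / real n"
      by (simp add: add_divide_distrib)
    moreover have "real n * (real k / real n) = real k"
      "real n * (1 - real k / real n) = real (n - k)"
      using assms(1) Suc.prems by (simp_all add: field_simps of_nat_diff)
    ultimately show "psi_kernel n (real (Suc k) / real n) t
        = psi_kernel n (real k / real n) t + t powr real k * (1 - t) powr real (n - k)"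
      using psi_kernel_shift[OF assms(1), of t "real k / real n"] t by auto
  qed simp
qed

lemma psi_grid:
  assumes "0 < n" "k \<le> n"
  shows "psi n (real k / real n) = (\<Sum>i<k. 1 / real (n choose i)) - 1"
proof -
  have "psi n (real k / real n)
      = (\<Sum>i<k. (real n + 1) * Beta (real i + 1) (real (n - i) + 1))
        - (real n + 1) * Beta (real 0 + 1) (real (n - 0) + 1)"
    using has_integral_psi_kernel_grid[OF assms]
    by (simp add: psi_eq_integral_psi_kernel integral_unique sum_distrib_left right_diff_distrib)
  also have "(\<Sum>i<k. (real n + 1) * Beta (real i + 1) (real (n - i) + 1))
      = (\<Sum>i<k. 1 / real (n choose i))"
    using assms(2) by (intro sum.cong refl Beta_binomial) auto
  also have "(real n + 1) * Beta (real 0 + 1) (real (n - 0) + 1) = 1"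
    using Beta_binomial[of 0 n] by simp
  finally show ?thesis .
qed

lemma psi_grid_Suc:
  assumes "k < n"
  shows "psi n (real (Suc k) / real n) = psi n (real k / real n) + 1 / real (n choose k)"
  using assms psi_grid[of n k] psi_grid[of n "Suc k"] by simp

lemma floor_mult_divide_le_of_gap:
  fixes c d x y :: real
  assumes "0 < c" "0 < d" "y \<le> x - 1 / c"
  shows "\<lfloor>y * d\<rfloor> / d \<le> \<lfloor>x * c\<rfloor> / c"
proof -
  have "\<lfloor>y * d\<rfloor> / d \<le> y"
    using assms(2) by (simp add: divide_le_eq)
  moreover have "x - 1 / c = (x * c - 1) / c"
    using assms(1) by (simp add: field_simps)
  moreover have "(x * c - 1) / c < \<lfloor>x * c\<rfloor> / c"
    using assms(1) by (intro divide_strict_right_mono) linarith+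
  ultimately show ?thesis
    using assms(3) by linarith
qed

theorem corollary2p7:
  fixes f :: "real \<Rightarrow> real" and n :: nat
  assumes "f 0 \<in> \<int>" and "f 1 \<in> \<int>" and "n \<ge> 3"
    and "\<forall>x y. 0 \<le> x \<longrightarrow> x \<le> y \<longrightarrow> y \<le> 1 \<longrightarrow> f y + psi n y \<le> f x + psi n x"
  shows "\<forall>x y. 0 \<le> x \<longrightarrow> x \<le> y \<longrightarrow> y \<le> 1 \<longrightarrow> Btilde n f y \<le> Btilde n f x"
proof (intro allI impI)
  fix x y :: real
  assume xy: "0 \<le> x" "x \<le> y" "y \<le> 1"
  define b where "b k = \<lfloor>f (real k / real n) * real (n choose k)\<rfloor> / real (n choose k)" for k
  have Btilde_eq: "Btilde n f z = (\<Sum>k\<le>n. b k * Bernstein n k z)" for z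
    unfolding Btilde_def b_def Bernstein_def atLeast0AtMost by (intro sum.cong) auto
  have "b (Suc k) \<le> b k" if "k < n" for k
  proof -
    have "real k / real n \<le> real (Suc k) / real n" "real (Suc k) / real n \<le> 1"
      using that by (simp_all add: divide_right_mono)
    then have "f (real (Suc k) / real n) + psi n (real (Suc k) / real n)
        \<le> f (real k / real n) + psi n (real k / real n)"
      using assms(4) by simp
    then have "f (real (Suc k) / real n) \<le> f (real k / real n) - 1 / real (n choose k)"
      using psi_grid_Suc[OF that] by simp
    then show ?thesis
      unfolding b_def using that by (intro floor_mult_divide_le_of_gap) auto
  qed
  then show "Btilde n f y \<le> Btilde n f x"
    unfolding Btilde_eq using xy by (rule Bernstein_sum_antimono)
qed

end
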